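(* Assume $C\le1$. Let $N,q,L\in\mathbb{N}_{\ge1}$ and $0<\varepsilon\le\frac1{2NL}$ with $$q\ge9\max\{1,A\}\quad\text{and}\quad N\ge\max\Big\{\frac4A,\ \frac{8(n+1)n\cdot2^nDA^{n-1}}{3C^n}\Big\}.$$ If $s\in S=\frac1{NL}\{0,\dots,L-1\}^n$ satisfies $H_{\mathrm{grid}}(\varepsilon)\cap G(s)=\emptyset$, then $$\frac1N\le\frac A4\quad\text{and}\quad\frac{|G(s)\setminus H_{\mathrm{bound}}|}{|G(s)|}\ge1-\frac1{4(n+1)}.$$
   Context: An $n$-dimensional infrastructure consists of a full-rank lattice $\Lambda\subset\mathbb{R}^n$, a finite non-empty set $X$, an injective map $d:X\to\mathbb{R}^n/\Lambda$, and a set $\mathrm{fRep}\subseteq X\times\mathbb{R}^n$ with $X\times\{0\}\subseteq\mathrm{fRep}$ such that $\Phi:\mathrm{fRep}\to\mathbb{R}^n/\Lambda$, $(x,t)\mapsto d(x)+t$, is a bijection. Let $\pi:\mathbb{R}^n\to\mathbb{R}^n/\Lambda$ be the projection, $\hat X=\pi^{-1}(d(X))$, and for $\hat x\in\hat X$ let $\hat V_{\hat x}=\{\hat x+t:(d^{-1}(\pi(\hat x)),t)\in\mathrm{fRep}\}$; these sets partition $\mathbb{R}^n$. Standing assumptions: the infrastructure is cornered (for each $\hat x$, $\hat x\in\hat V_{\hat x}$ and $\{r:\hat x\le r\le t\}\subseteq\hat V_{\hat x}$ for all $t\in\hat V_{\hat x}$, componentwise order); (A1) there is $A>0$ with $\hat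 V_{\hat x}\subseteq\hat x+[0,A]^n$ for all $\hat x$; (A2) there are $C,D>0$ such that $(r+[0,C]^n)\cap\hat X$ has at most $D$ elements for every $r\in\mathbb{R}^n$. $G(s)=\{s+\frac1Nv:v\in\{0,\dots,qN-1\}^n\}$. $H=\bigcup_{\hat x}\partial\hat V_{\hat x}$ (topological boundaries), $H_{\mathrm{bound}}=(-\frac1N,0]^n+H$, $\mathbb{N}=\{0,1,2,\dots\}$, and $H_{\mathrm{grid}}(\varepsilon)=\bigcup_{\hat x\in\hat X}\big((\frac1N\mathbb{N}^n+\partial\hat V_{\hat x})\cap\overline{\hat V_{\hat x}}\big)+[-\varepsilon,\varepsilon]^n$. *)

theory Defs
  imports "HOL-Analysis.Analysis"
begin

text \<open>Points of R^n are vectors of type real^'n, n = CARD('n).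
  The order on real^'n is the componentwise order.\<close>

definition full_rank_lattice :: "(real^'n) set \<Rightarrow> bool" where
  "full_rank_lattice \<Lambda> \<longleftrightarrow>
     (\<exists>B::'n \<Rightarrow> real^'n. inj B \<and> independent (range B) \<and>
        \<Lambda> = {(\<Sum>i\<in>UNIV. of_int (k i) *\<^sub>R B i) | k::'n \<Rightarrow> int. True})"

text \<open>The map d : X -> R^n/Lambda is represented by a choice of representatives
  d x in R^n; congruence modulo Lambda is "difference in Lambda".\<close>

definition infrastructure ::
  "(real^'n) set \<Rightarrow> 'x set \<Rightarrow> ('x \<Rightarrow> real^'n) \<Rightarrow> ('x \<times> (real^'n)) set \<Rightarrow> bool" where
  "infrastructure \<Lambda> X d fRep \<longleftrightarrow>
     full_rank_lattice \<Lambda> \<and> finite X \<and> X \<noteq> {} \<and>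
     (\<forall>x\<in>X. \<forall>y\<in>X. d x - d y \<in> \<Lambda> \<longrightarrow> x = y) \<and>
     fRep \<subseteq> X \<times> UNIV \<and> X \<times> {0} \<subseteq> fRep \<and>
     (\<forall>r. \<exists>(x,t)\<in>fRep. r - (d x + t) \<in> \<Lambda>) \<and>
     (\<forall>(x,t)\<in>fRep. \<forall>(y,u)\<in>fRep. (d x + t) - (d y + u) \<in> \<Lambda> \<longrightarrow> (x,t) = (y,u))"

definition Xhat :: "(real^'n) set \<Rightarrow> 'x set \<Rightarrow> ('x \<Rightarrow> real^'n) \<Rightarrow> (real^'n) set" where
  "Xhat \<Lambda> X d = {d x + l | x l. x \<in> X \<and> l \<in> \<Lambda>}"

definition Vhat ::
  "(real^'n) set \<Rightarrow> 'x set \<Rightarrow> ('x \<Rightarrow> real^'n) \<Rightarrow> ('x \<times> (real^'n)) set \<Rightarrow> real^'n \<Rightarrow> (real^'n) set" where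
  "Vhat \<Lambda> X d fRep xh = {xh + t | x t. x \<in> X \<and> xh - d x \<in> \<Lambda> \<and> (x, t) \<in> fRep}"

definition cornered ::
  "(real^'n) set \<Rightarrow> 'x set \<Rightarrow> ('x \<Rightarrow> real^'n) \<Rightarrow> ('x \<times> (real^'n)) set \<Rightarrow> bool" where
  "cornered \<Lambda> X d fRep \<longleftrightarrow>
     (\<forall>xh\<in>Xhat \<Lambda> X d. xh \<in> Vhat \<Lambda> X d fRep xh \<and>
        (\<forall>t\<in>Vhat \<Lambda> X d fRep xh. {r. xh \<le> r \<and> r \<le> t} \<subseteq> Vhat \<Lambda> X d fRep xh))"

definition cube :: "real \<Rightarrow> real \<Rightarrow> (real^'n) set" where
  "cube a b = {v. \<forall>i. a \<le> v $ i \<and> v $ i \<le> b}"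

definition Gset :: "nat \<Rightarrow> nat \<Rightarrow> real^'n \<Rightarrow> (real^'n) set" where
  "Gset N q s = {s + (1 / real N) *\<^sub>R (\<chi> i. real (v i)) | v::'n \<Rightarrow> nat. \<forall>i. v i < q * N}"

definition Sset :: "nat \<Rightarrow> nat \<Rightarrow> (real^'n) set" where
  "Sset N L = {(1 / real (N * L)) *\<^sub>R (\<chi> i. real (k i)) | k::'n \<Rightarrow> nat. \<forall>i. k i < L}"

definition grid :: "nat \<Rightarrow> (real^'n) set" where
  "grid N = {(1 / real N) *\<^sub>R (\<chi> i. real (k i)) | k::'n \<Rightarrow> nat. True}"

definition Hset ::
  "(real^'n) set \<Rightarrow> 'x set \<Rightarrow> ('x \<Rightarrow> real^'n) \<Rightarrow> ('x \<times> (real^'n)) set \<Rightarrow> (real^'n) set" where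
  "Hset \<Lambda> X d fRep = (\<Union>xh\<in>Xhat \<Lambda> X d. frontier (Vhat \<Lambda> X d fRep xh))"

definition Hbound ::
  "(real^'n) set \<Rightarrow> 'x set \<Rightarrow> ('x \<Rightarrow> real^'n) \<Rightarrow> ('x \<times> (real^'n)) set \<Rightarrow> nat \<Rightarrow> (real^'n) set" where
  "Hbound \<Lambda> X d fRep N =
     {a + h | a h. (\<forall>i. - (1 / real N) < a $ i \<and> a $ i \<le> 0) \<and> h \<in> Hset \<Lambda> X d fRep}"

definition Hgrid ::
  "(real^'n) set \<Rightarrow> 'x set \<Rightarrow> ('x \<Rightarrow> real^'n) \<Rightarrow> ('x \<times> (real^'n)) set \<Rightarrow> nat \<Rightarrow> real \<Rightarrow> (real^'n) set" where
  "Hgrid \<Lambda> X d fRep N \<epsilon> =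
     {p + e | p e.
        p \<in> (\<Union>xh\<in>Xhat \<Lambda> X d.
               {g + b | g b. g \<in> grid N \<and> b \<in> frontier (Vhat \<Lambda> X d fRep xh)}
               \<inter> closure (Vhat \<Lambda> X d fRep xh))
        \<and> e \<in> cube (- \<epsilon>) \<epsilon>}"

end

theory Submission
  imports Defs
begin

text \<open>Every point of \<open>H\<close> is also reached from inside some cell \<open>V\<^sub>y\<close> along the negative
  diagonal, because only finitely many cells meet a short diagonal segment below it; since the
  cells are cornered, these diagonal frontier points of a fixed cell form an antichain for the
  strict componentwise order. A point of \<open>G(s)\<close> lying in \<open>H_bound\<close> has such a point in its grid
  cell of side \<open>1/N\<close>. The cells concerned have corners in a box of side \<open>q + A\<close>, so (A2) allows
  at most \<open>\<lceil>(q + A)/C\<rceil>^n D\<close> of them, and for a fixed cell the grid cells form an antichain in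
  a box of side \<open>\<lceil>AN\<rceil> + 1\<close>, of which there are at most \<open>n (\<lceil>AN\<rceil> + 1)^(n-1)\<close>. The bounds on \<open>q\<close>
  and \<open>N\<close> make the product at most \<open>|G(s)| / (4(n + 1))\<close>.\<close>

lemma card_PiE_face:
  fixes i :: "'n::finite" and a :: "'n \<Rightarrow> int" and m :: nat
  shows "card (PiE UNIV (\<lambda>j. if j = i then {a j} else {a j..<a j + int m})) = m ^ (CARD('n) - 1)"
proof -
  have "card (PiE UNIV (\<lambda>j. if j = i then {a j} else {a j..<a j + int m}))
      = (\<Prod>j\<in>UNIV. if j = i then 1 else m)"
    by (simp add: card_PiE if_distrib cong: if_cong)
  also have "\<dots> = (\<Prod>j\<in>UNIV - {i}. m)"
    by (subst prod.remove[of _ i]) (auto intro: prod.cong)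
  finally show ?thesis by (simp add: card_Diff_singleton)
qed

lemma card_strict_antichain_le:
  fixes B :: "('n::finite \<Rightarrow> int) set" and a :: "'n \<Rightarrow> int" and m :: nat
  assumes range: "\<And>v i. v \<in> B \<Longrightarrow> a i \<le> v i \<and> v i < a i + int m"
    and antichain: "\<And>v w. v \<in> B \<Longrightarrow> w \<in> B \<Longrightarrow> \<not> (\<forall>i. w i < v i)"
  shows "finite B" and "card B \<le> CARD('n) * m ^ (CARD('n) - 1)"
proof -
  show "finite B"
    by (rule finite_subset[of _ "PiE UNIV (\<lambda>i. {a i..<a i + int m})"])
       (use range in \<open>auto simp: PiE_iff intro: finite_PiE\<close>)
  define \<mu> where "\<mu> v = Min (range (\<lambda>i. v i - a i))" for v :: "'n \<Rightarrow> int"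
  have \<mu>_le: "\<mu> v \<le> v i - a i" for v i
    unfolding \<mu>_def by (rule Min_le) auto
  have \<mu>_attained: "\<exists>i. \<mu> v = v i - a i" for v
  proof -
    have "\<mu> v \<in> range (\<lambda>i. v i - a i)" unfolding \<mu>_def by (rule Min_in) auto
    then show ?thesis by auto
  qed
  define T where "T i = PiE UNIV (\<lambda>j. if j = i then {a j} else {a j..<a j + int m})" for i
  \<comment> \<open>Sliding each point down the diagonal until it hits a lower face of the box is
    injective on an antichain, and the lower faces are \<open>n\<close> boxes of dimension \<open>n - 1\<close>.\<close>
  define slide where "slide v = (\<lambda>i. v i - \<mu> v)" for v :: "'n \<Rightarrow> int"
  have "slide v \<in> (\<Union>i. T i)" if v: "v \<in> B" for v
  proof -
    obtain i0 where i0: "\<mu> v = v i0 - a i0" using \<mu>_attained by blast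
    have "0 \<le> \<mu> v" using i0 range[OF v] by simp
    then have "a j \<le> slide v j \<and> slide v j < a j + int m" for j
      using \<mu>_le[of v j] range[OF v, of j] unfolding slide_def by auto
    then have "slide v \<in> T i0"
      unfolding T_def using i0 by (auto simp: PiE_iff slide_def)
    then show ?thesis by blast
  qed
  moreover have "inj_on slide B"
  proof
    fix v w assume v: "v \<in> B" and w: "w \<in> B" and eq: "slide v = slide w"
    have diff: "v i - w i = \<mu> v - \<mu> w" for i
      using fun_cong[OF eq, of i] unfolding slide_def by simp
    consider "\<mu> v = \<mu> w" | "\<mu> w < \<mu> v" | "\<mu> v < \<mu> w" by linarith
    then show "v = w"
    proof cases
      case 1
      then show ?thesis using diff by (auto intro: ext)
    next
      case 2
      then have "\<forall>i. w i < v i" using diff by (metis diff_gt_0_iff_gt)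
      then show ?thesis using antichain[OF v w] by blast
    next
      case 3
      then have "\<forall>i. v i < w i" using diff by (metis diff_less_0_iff_less)
      then show ?thesis using antichain[OF w v] by blast
    qed
  qed
  moreover have "card (T i) = m ^ (CARD('n) - 1)" for i
    unfolding T_def by (rule card_PiE_face)
  moreover have "finite (T i)" for i
    unfolding T_def by (auto intro: finite_PiE)
  ultimately have "card B \<le> card (\<Union>i. T i)"
    by (intro card_inj_on_le[of slide]) auto
  also have "\<dots> \<le> (\<Sum>i\<in>UNIV. card (T i))"
    by (rule card_UN_le) simp
  also have "\<dots> = CARD('n) * m ^ (CARD('n) - 1)"
    using \<open>\<And>i. card (T i) = m ^ (CARD('n) - 1)\<close> by simp
  finally show "card B \<le> CARD('n) * m ^ (CARD('n) - 1)" .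
qed

definition half_open_cube :: "real^'n \<Rightarrow> real \<Rightarrow> (real^'n) set" where
  "half_open_cube r R = {y. \<forall>i. r$i \<le> y$i \<and> y$i < r$i + R}"

lemma half_open_cube_subset_UN_cubes:
  fixes r :: "real^'n"
  assumes C: "C > 0"
  shows "half_open_cube r R \<subseteq>
    (\<Union>j\<in>PiE UNIV (\<lambda>_. {..<nat \<lceil>R / C\<rceil>}). (\<lambda>v. (r + (\<chi> i. C * real (j i))) + v) ` cube 0 C)"
proof
  fix y assume y: "y \<in> half_open_cube r R"
  define j where "j i = nat \<lfloor>(y$i - r$i) / C\<rfloor>" for i
  have j: "real (j i) = of_int \<lfloor>(y$i - r$i) / C\<rfloor>" for i
    using y C unfolding half_open_cube_def j_def by simp
  have "j i < nat \<lceil>R / C\<rceil>" for i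
  proof -
    have "(y$i - r$i) / C < R / C"
      using y C unfolding half_open_cube_def
      by (intro divide_strict_right_mono) (auto simp: algebra_simps)
    then have "real (j i) < of_int \<lceil>R / C\<rceil>"
      unfolding j using le_of_int_ceiling[of "R / C"] by linarith
    then show ?thesis by linarith
  qed
  then have "j \<in> PiE UNIV (\<lambda>_. {..<nat \<lceil>R / C\<rceil>})" by (simp add: PiE_iff)
  moreover have "y - (r + (\<chi> i. C * real (j i))) \<in> cube 0 C"
  proof -
    have "C * real (j i) \<le> y$i - r$i \<and> y$i - r$i \<le> C * real (j i) + C" for i
    proof -
      have "real (j i) \<le> (y$i - r$i) / C \<and> (y$i - r$i) / C \<le> real (j i) + 1"
        unfolding j by linarith
      then show ?thesis using C by (simp add: field_simps)
    qed
    then show ?thesis unfolding cube_def by (simp add: algebra_simps)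
  qed
  ultimately show "y \<in> (\<Union>j\<in>PiE UNIV (\<lambda>_. {..<nat \<lceil>R / C\<rceil>}).
      (\<lambda>v. (r + (\<chi> i. C * real (j i))) + v) ` cube 0 C)"
    by (auto intro!: image_eqI[of _ _ "y - (r + (\<chi> i. C * real (j i)))"])
qed

lemma card_Int_half_open_cube_le:
  fixes Y :: "(real^'n) set" and r :: "real^'n" and C D R :: real
  assumes C: "C > 0"
    and cubes: "\<forall>r. finite ((\<lambda>v. r + v) ` cube 0 C \<inter> Y) \<and>
                    real (card ((\<lambda>v. r + v) ` cube 0 C \<inter> Y)) \<le> D"
  shows "finite (Y \<inter> half_open_cube r R)"
    and "real (card (Y \<inter> half_open_cube r R)) \<le> real (nat \<lceil>R / C\<rceil>) ^ CARD('n) * D"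
proof -
  define J where "J = PiE (UNIV::'n set) (\<lambda>_. {..<nat \<lceil>R / C\<rceil>})"
  define Q where "Q j = (\<lambda>v. (r + (\<chi> i. C * real (j i))) + v) ` cube 0 C \<inter> Y"
    for j :: "'n \<Rightarrow> nat"
  have finJ: "finite J" unfolding J_def by (simp add: finite_PiE)
  have "Y \<inter> half_open_cube r R \<subseteq> (\<Union>j\<in>J. Q j)"
    using half_open_cube_subset_UN_cubes[OF C, of r R] unfolding J_def Q_def by blast
  moreover have "finite (\<Union>j\<in>J. Q j)"
    using finJ cubes unfolding Q_def by blast
  ultimately have "finite (Y \<inter> half_open_cube r R)"
    and "card (Y \<inter> half_open_cube r R) \<le> card (\<Union>j\<in>J. Q j)"
    by (auto intro: finite_subset card_mono)
  then show "finite (Y \<inter> half_open_cube r R)" by blast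
  have "real (card (Y \<inter> half_open_cube r R)) \<le> (\<Sum>j\<in>J. real (card (Q j)))"
    using \<open>card (Y \<inter> half_open_cube r R) \<le> card (\<Union>j\<in>J. Q j)\<close> card_UN_le[OF finJ, of Q]
    by (simp flip: of_nat_sum)
  also have "\<dots> \<le> (\<Sum>j\<in>J. D)"
    using cubes unfolding Q_def by (intro sum_mono) blast
  also have "\<dots> = real (nat \<lceil>R / C\<rceil>) ^ CARD('n) * D"
    unfolding J_def by (simp add: card_PiE)
  finally show "real (card (Y \<inter> half_open_cube r R)) \<le> real (nat \<lceil>R / C\<rceil>) ^ CARD('n) * D" .
qed

lemma real_nat_ceiling_le: "x \<ge> 0 \<Longrightarrow> real (nat \<lceil>x\<rceil>) \<le> x + 1"
  using of_int_ceiling_le_add_one[of x] by linarith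

lemma boundary_count_le_fraction:
  fixes n N q :: nat and A C D :: real
  assumes n: "n \<ge> 1" and A: "A > 0" and C: "C > 0" "C \<le> 1" and D: "D > 0"
    and q: "real q \<ge> 9 * max 1 A"
    and NA: "real N \<ge> 4 / A"
    and ND: "real N \<ge> 8 * (real n + 1) * real n * 2 ^ n * D * A ^ (n - 1) / (3 * C ^ n)"
  shows "real (nat \<lceil>(real q + A) / C\<rceil>) ^ n * D * real (n * (nat \<lceil>A * real N\<rceil> + 1) ^ (n - 1))
     \<le> real ((q * N) ^ n) / (4 * (real n + 1))"
proof -
  obtain k where nk: "n = Suc k" using n by (cases n) auto
  define K where "K = real (nat \<lceil>(real q + A) / C\<rceil>)"
  define m where "m = real (nat \<lceil>A * real N\<rceil> + 1)"
  have AN: "A * real N \<ge> 4" using NA A by (simp add: divide_le_eq mult.commute)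
  have "K \<le> (real q + A) / C + 1"
    unfolding K_def using A C by (intro real_nat_ceiling_le) simp
  also have "\<dots> = (real q + A + C) / C" using C by (simp add: field_simps)
  also have "\<dots> \<le> (5/4 * real q) / C" using C q A by (intro divide_right_mono) auto
  finally have K_le: "K \<le> 5/4 * real q / C" .
  have "m \<le> A * real N + 2"
    unfolding m_def using real_nat_ceiling_le[of "A * real N"] AN
    by (simp only: of_nat_add of_nat_1) linarith
  then have m_le: "m \<le> 3/2 * (A * real N)" using AN by simp
  have Cn: "C ^ n > 0" using C by simp
  have "8 * (real n + 1) * real n * 2 ^ n * D * A ^ k \<le> real N * (3 * C ^ n)"
    using ND Cn unfolding nk by (simp add: divide_le_eq)
  moreover have "8 * (real n + 1) * real n * 2 ^ n > 0" using n by simp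
  ultimately have DA: "D * A ^ k \<le> 3 * C ^ n * real N / (8 * (real n + 1) * real n * 2 ^ n)"
    by (simp add: le_divide_eq algebra_simps)
  have "(5/4::real) ^ n * (3/2) ^ n \<le> 2 ^ n"
    unfolding power_mult_distrib[symmetric] by (rule power_mono) auto
  then have const: "(5/4::real) ^ n * (3/2) ^ k * 3 / (8 * 2 ^ n) \<le> 1/4"
    unfolding nk by (simp add: field_simps)
  have "K ^ n * D * real (n * (nat \<lceil>A * real N\<rceil> + 1) ^ (n - 1)) = K ^ n * real n * m ^ k * D"
    unfolding m_def nk by (simp only: of_nat_mult of_nat_power diff_Suc_1) (simp add: mult_ac)
  also have "\<dots> \<le> (5/4 * real q / C) ^ n * real n * (3/2 * (A * real N)) ^ k * D"
    using K_le m_le D by (intro mult_right_mono mult_mono power_mono) (auto simp: K_def m_def)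
  also have "\<dots> = ((5/4) ^ n * (3/2) ^ k * real q ^ n * real N ^ k * real n / C ^ n) * (D * A ^ k)"
    by (simp add: power_mult_distrib power_divide mult_ac)
  also have "\<dots> \<le> ((5/4) ^ n * (3/2) ^ k * real q ^ n * real N ^ k * real n / C ^ n) *
      (3 * C ^ n * real N / (8 * (real n + 1) * real n * 2 ^ n))"
    using DA C by (intro mult_left_mono) auto
  also have "\<dots> = ((5/4) ^ n * (3/2) ^ k * 3 / (8 * 2 ^ n)) * ((real q * real N) ^ n / (real n + 1))"
    using C n unfolding nk by (simp add: divide_simps power_mult_distrib)
  also have "\<dots> \<le> 1/4 * ((real q * real N) ^ n / (real n + 1))"
    using const by (intro mult_right_mono) auto
  finally show ?thesis unfolding K_def by simp
qed

lemma card_Diff_ratio_ge: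
  assumes "finite G" "G \<noteq> {}" "real (card (G \<inter> B)) \<le> c * real (card G)"
  shows "1 - c \<le> real (card (G - B)) / real (card G)"
proof -
  have "card G > 0" using assms(1,2) by (simp add: card_gt_0_iff)
  moreover have "card (G - B) = card G - card (G \<inter> B)" "card (G \<inter> B) \<le> card G"
    using assms(1) by (simp_all add: card_Diff_subset_Int card_mono)
  ultimately show ?thesis using assms(3) by (simp add: field_simps of_nat_diff)
qed

lemma full_rank_lattice_diff:
  fixes \<Lambda> :: "(real^'n) set"
  assumes "full_rank_lattice \<Lambda>" "a \<in> \<Lambda>" "b \<in> \<Lambda>"
  shows "a - b \<in> \<Lambda>"
proof -
  obtain B :: "'n \<Rightarrow> real^'n"
    where \<Lambda>: "\<Lambda> = {(\<Sum>i\<in>UNIV. of_int (k i) *\<^sub>R B i) | k::'n \<Rightarrow> int. True}"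
    using assms(1) unfolding full_rank_lattice_def by blast
  obtain ka kb where a: "a = (\<Sum>i\<in>UNIV. of_int (ka i) *\<^sub>R B i)"
    and b: "b = (\<Sum>i\<in>UNIV. of_int (kb i) *\<^sub>R B i)"
    using assms(2,3) unfolding \<Lambda> by blast
  have "a - b = (\<Sum>i\<in>UNIV. of_int (ka i - kb i) *\<^sub>R B i)"
    unfolding a b sum_subtractf[symmetric] by (simp add: scaleR_diff_left)
  then show ?thesis unfolding \<Lambda> by (auto intro!: exI[of _ "\<lambda>i. ka i - kb i"])
qed

definition grid_point :: "nat \<Rightarrow> real^'n \<Rightarrow> ('n \<Rightarrow> nat) \<Rightarrow> real^'n" where
  "grid_point N s v = s + (1 / real N) *\<^sub>R (\<chi> i. real (v i))"

lemma grid_point_nth [simp]: "grid_point N s v $ i = s$i + real (v i) / real N"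
  by (simp add: grid_point_def)

lemma inj_grid_point: "N \<ge> 1 \<Longrightarrow> inj (grid_point N s)"
  by (rule injI) (auto simp: vec_eq_iff)

lemma Gset_eq_image: "Gset N q s = grid_point N s ` {v. \<forall>i. v i < q * N}"
  unfolding Gset_def grid_point_def by blast

lemma finite_card_Gset:
  fixes s :: "real^'n"
  assumes "N \<ge> 1"
  shows "finite (Gset N q s)" and "card (Gset N q s) = (q * N) ^ CARD('n)"
proof -
  have box: "{v::'n \<Rightarrow> nat. \<forall>i. v i < q * N} = PiE UNIV (\<lambda>_. {..<q * N})"
    by (auto simp: PiE_iff)
  show "finite (Gset N q s)"
    unfolding Gset_eq_image box by (simp add: finite_PiE)
  show "card (Gset N q s) = (q * N) ^ CARD('n)"
    unfolding Gset_eq_image using inj_grid_point[OF assms]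
    by (subst card_image) (auto simp: box card_PiE intro: inj_on_subset)
qed

locale infrastructure_tiling =
  fixes \<Lambda> :: "(real^'n) set" and X :: "'x set" and d :: "'x \<Rightarrow> real^'n"
    and fRep :: "('x \<times> (real^'n)) set"
  assumes infra: "infrastructure \<Lambda> X d fRep"
begin

abbreviation "V \<equiv> Vhat \<Lambda> X d fRep"
abbreviation "Xh \<equiv> Xhat \<Lambda> X d"

lemma full_rank: "full_rank_lattice \<Lambda>"
  using infra unfolding infrastructure_def by (elim conjE) assumption

lemma fRep_subset: "fRep \<subseteq> X \<times> UNIV"
  using infra unfolding infrastructure_def by (elim conjE) assumption

lemma fRep_surj: "\<exists>(x, t)\<in>fRep. r - (d x + t) \<in> \<Lambda>"
proof -
  have "\<forall>r. \<exists>(x, t)\<in>fRep. r - (d x + t) \<in> \<Lambda>"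
    using infra unfolding infrastructure_def by (elim conjE) assumption
  then show ?thesis by blast
qed

lemma fRep_inj:
  assumes "(x, t) \<in> fRep" "(y, u) \<in> fRep" "(d x + t) - (d y + u) \<in> \<Lambda>"
  shows "(x, t) = (y, u)"
proof -
  have "\<forall>(x, t)\<in>fRep. \<forall>(y, u)\<in>fRep. (d x + t) - (d y + u) \<in> \<Lambda> \<longrightarrow> (x, t) = (y, u)"
    using infra unfolding infrastructure_def by (elim conjE) assumption
  then show ?thesis using assms by blast
qed

lemma Vhat_disjoint:
  assumes "p \<in> V xh" "p \<in> V yh"
  shows "xh = yh"
proof -
  obtain x t where x: "p = xh + t" "xh - d x \<in> \<Lambda>" "(x, t) \<in> fRep"
    using assms(1) unfolding Vhat_def by blast
  obtain y u where y: "p = yh + u" "yh - d y \<in> \<Lambda>" "(y, u) \<in> fRep"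
    using assms(2) unfolding Vhat_def by blast
  have "(d x + t) - (d y + u) = (yh - d y) - (xh - d x)"
    using x(1) y(1) by (simp add: algebra_simps)
  also have "\<dots> \<in> \<Lambda>"
    using full_rank y(2) x(2) by (rule full_rank_lattice_diff)
  finally have "(x, t) = (y, u)"
    using x(3) y(3) fRep_inj by blast
  then show ?thesis using x(1) y(1) by simp
qed

lemma Vhat_cover: "\<exists>yh\<in>Xh. r \<in> V yh"
proof -
  obtain x t where xt: "(x, t) \<in> fRep" "r - (d x + t) \<in> \<Lambda>"
    using fRep_surj by blast
  have x: "x \<in> X" using xt(1) fRep_subset by blast
  define yh where "yh = r - t"
  have "yh = d x + (r - (d x + t))" unfolding yh_def by simp
  then have "yh \<in> Xh" unfolding Xhat_def using x xt by blast
  moreover have "r \<in> V yh"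
    unfolding Vhat_def yh_def using x xt by (auto simp: algebra_simps)
  ultimately show ?thesis by blast
qed

lemma frontier_Vhat_not_interior:
  assumes "h \<in> frontier (V xh)"
  shows "h \<notin> interior (V yh)"
proof (cases "yh = xh")
  case True
  then show ?thesis using assms unfolding frontier_def by blast
next
  case False
  have "p \<notin> V xh" if "p \<in> interior (V yh)" for p
    using Vhat_disjoint[of p yh xh] False interior_subset that by blast
  then have "interior (V yh) \<inter> V xh = {}" by blast
  then have "interior (V yh) \<inter> closure (V xh) = {}"
    using open_Int_closure_eq_empty[OF open_interior] by blast
  then show ?thesis using assms unfolding frontier_def by blast
qed

end

locale regular_infrastructure = infrastructure_tiling \<Lambda> X d fRep
  for \<Lambda> :: "(real^'n) set" and X :: "'x set" and d fRep +
  fixes A C D :: real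
  assumes cornered: "cornered \<Lambda> X d fRep"
    and A_pos: "A > 0"
    and Vhat_subset_cube: "\<forall>xh\<in>Xhat \<Lambda> X d. Vhat \<Lambda> X d fRep xh \<subseteq> (\<lambda>v. xh + v) ` cube 0 A"
    and C_pos: "C > 0"
    and cubes: "\<forall>r::real^'n. finite ((\<lambda>v. r + v) ` cube 0 C \<inter> Xhat \<Lambda> X d) \<and>
              real (card ((\<lambda>v. r + v) ` cube 0 C \<inter> Xhat \<Lambda> X d)) \<le> D"
begin

lemma Vhat_bounds:
  assumes "yh \<in> Xh" "p \<in> V yh"
  shows "yh$i \<le> p$i \<and> p$i \<le> yh$i + A"
  using Vhat_subset_cube assms unfolding cube_def by force

definition diag_frontier :: "real^'n \<Rightarrow> (real^'n) set" where
  "diag_frontier yh =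
     {h. h \<notin> interior (V yh) \<and> (\<forall>e>0. \<exists>\<delta>>0. \<delta> < e \<and> h - (\<chi> i. \<delta>) \<in> V yh)}"

lemma diag_frontier_approach:
  assumes "h \<in> diag_frontier yh" "e > 0"
  shows "\<exists>\<delta>>0. \<delta> < e \<and> h - (\<chi> i. \<delta>) \<in> V yh"
  using assms unfolding diag_frontier_def by blast

lemma diag_frontier_bounds:
  assumes yh: "yh \<in> Xh" and h: "h \<in> diag_frontier yh"
  shows "yh$i < h$i \<and> h$i \<le> yh$i + A"
proof
  obtain \<delta> where "\<delta> > 0" "h - (\<chi> i. \<delta>) \<in> V yh"
    using diag_frontier_approach[OF h zero_less_one] by blast
  then show "yh$i < h$i" using Vhat_bounds[OF yh, of "h - (\<chi> i. \<delta>)" i] by simp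
  show "h$i \<le> yh$i + A"
  proof (rule ccontr)
    assume "\<not> h$i \<le> yh$i + A"
    then obtain \<delta> where "\<delta> > 0" "\<delta> < h$i - yh$i - A" "h - (\<chi> i. \<delta>) \<in> V yh"
      using diag_frontier_approach[OF h, of "h$i - yh$i - A"] by auto
    then show False using Vhat_bounds[OF yh, of "h - (\<chi> i. \<delta>)" i] by simp
  qed
qed

text \<open>Cornered cells make the diagonal frontier an antichain: below a point of it that
  strictly dominates \<open>h\<close> lies a point of the cell, and the open box spanned with the
  corner then puts \<open>h\<close> into the interior.\<close>

lemma diag_frontier_antichain:
  assumes yh: "yh \<in> Xh" and h: "h \<in> diag_frontier yh" and h': "h' \<in> diag_frontier yh"
  shows "\<not> (\<forall>i. h$i < h'$i)"
proof
  assume lt: "\<forall>i. h$i < h'$i"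
  define e where "e = Min (range (\<lambda>i. h'$i - h$i))"
  have "e > 0" unfolding e_def using lt by (simp add: Min_gr_iff)
  then obtain \<delta> where \<delta>: "\<delta> > 0" "\<delta> < e" and p: "h' - (\<chi> i. \<delta>) \<in> V yh"
    using diag_frontier_approach[OF h'] by blast
  have "yh$i < h$i \<and> h$i < (h' - (\<chi> i. \<delta>))$i" for i
  proof -
    have "e \<le> h'$i - h$i" unfolding e_def by (rule Min_le) auto
    then show ?thesis using diag_frontier_bounds[OF yh h, of i] \<delta> by simp
  qed
  then have "h \<in> box yh (h' - (\<chi> i. \<delta>))" by (simp add: mem_box_cart)
  moreover have "box yh (h' - (\<chi> i. \<delta>)) \<subseteq> V yh"
  proof -
    have "box yh (h' - (\<chi> i. \<delta>)) \<subseteq> {r. yh \<le> r \<and> r \<le> h' - (\<chi> i. \<delta>)}"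
      by (auto simp: mem_box_cart less_eq_vec_def less_imp_le)
    also have "\<dots> \<subseteq> V yh"
      using cornered yh p unfolding cornered_def by blast
    finally show ?thesis .
  qed
  ultimately have "h \<in> interior (V yh)"
    using interior_maximal[OF _ open_box] by blast
  then show False using h unfolding diag_frontier_def by blast
qed

lemma finite_cells_below:
  "finite {yh \<in> Xh. \<exists>\<delta>. 0 < \<delta> \<and> \<delta> \<le> 1 \<and> h - (\<chi> i. \<delta>) \<in> V yh}"
proof -
  have "{yh \<in> Xh. \<exists>\<delta>. 0 < \<delta> \<and> \<delta> \<le> 1 \<and> h - (\<chi> i. \<delta>) \<in> V yh}
      \<subseteq> Xh \<inter> half_open_cube (h - (\<chi> i. A + 1)) (A + 2)"
  proof
    fix yh assume "yh \<in> {yh \<in> Xh. \<exists>\<delta>. 0 < \<delta> \<and> \<delta> \<le> 1 \<and> h - (\<chi> i. \<delta>) \<in> V yh}"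
    then obtain \<delta> where yh: "yh \<in> Xh" and \<delta>: "0 < \<delta>" "\<delta> \<le> 1" "h - (\<chi> i. \<delta>) \<in> V yh"
      by blast
    have "h$i - (A + 1) \<le> yh$i \<and> yh$i < h$i - (A + 1) + (A + 2)" for i
      using Vhat_bounds[OF yh \<delta>(3), of i] \<delta> by simp
    then show "yh \<in> Xh \<inter> half_open_cube (h - (\<chi> i. A + 1)) (A + 2)"
      using yh unfolding half_open_cube_def by simp
  qed
  then show ?thesis
    using card_Int_half_open_cube_le(1)[OF C_pos cubes] finite_subset by blast
qed

lemma Hset_subset_diag_frontier:
  assumes "h \<in> Hset \<Lambda> X d fRep"
  shows "\<exists>yh\<in>Xh. h \<in> diag_frontier yh"
proof -
  obtain xh where xh: "h \<in> frontier (V xh)"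
    using assms unfolding Hset_def by blast
  define F where "F = {yh \<in> Xh. \<exists>\<delta>. 0 < \<delta> \<and> \<delta> \<le> 1 \<and> h - (\<chi> i. \<delta>) \<in> V yh}"
  have "finite F" unfolding F_def by (rule finite_cells_below)
  \<comment> \<open>Otherwise every cell of \<open>F\<close> misses the diagonal below some threshold, and below the
    least of these finitely many thresholds no cell at all would contain \<open>h - (\<delta>,\<dots>,\<delta>)\<close>.\<close>
  have "\<exists>yh\<in>F. \<forall>e>0. \<exists>\<delta>>0. \<delta> < e \<and> h - (\<chi> i. \<delta>) \<in> V yh"
  proof (rule ccontr)
    assume "\<not> ?thesis"
    then have "\<forall>yh\<in>F. \<exists>e>0. \<forall>\<delta>. 0 < \<delta> \<and> \<delta> < e \<longrightarrow> h - (\<chi> i. \<delta>) \<notin> V yh"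
      by blast
    then obtain e where e: "\<And>yh \<delta>. yh \<in> F \<Longrightarrow> e yh > 0 \<and> (0 < \<delta> \<and> \<delta> < e yh \<longrightarrow> h - (\<chi> i. \<delta>) \<notin> V yh)"
      by metis
    define \<mu> where "\<mu> = Min (insert 1 (e ` F))"
    have \<mu>: "0 < \<mu>" "\<mu> \<le> 1" "\<And>yh. yh \<in> F \<Longrightarrow> \<mu> \<le> e yh"
      unfolding \<mu>_def using \<open>finite F\<close> e by auto
    define \<delta> where "\<delta> = \<mu> / 2"
    have \<delta>: "0 < \<delta>" "\<delta> \<le> 1" "\<And>yh. yh \<in> F \<Longrightarrow> \<delta> < e yh"
      unfolding \<delta>_def using \<mu> by force+
    obtain yh where "yh \<in> Xh" "h - (\<chi> i. \<delta>) \<in> V yh" using Vhat_cover by blast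
    then have "yh \<in> F" unfolding F_def using \<delta> by blast
    then show False using e \<delta> \<open>h - (\<chi> i. \<delta>) \<in> V yh\<close> by blast
  qed
  then obtain yh where "yh \<in> F" "\<forall>e>0. \<exists>\<delta>>0. \<delta> < e \<and> h - (\<chi> i. \<delta>) \<in> V yh"
    by blast
  moreover have "h \<notin> interior (V yh)" using frontier_Vhat_not_interior[OF xh] .
  ultimately show ?thesis unfolding diag_frontier_def F_def by blast
qed

definition diag_frontier_cells :: "nat \<Rightarrow> real^'n \<Rightarrow> real^'n \<Rightarrow> ('n \<Rightarrow> nat) set" where
  "diag_frontier_cells N s yh =
     {v. \<exists>h\<in>diag_frontier yh. \<forall>i. grid_point N s v $ i \<le> h$i \<and> h$i < grid_point N s v $ i + 1 / real N}"

lemma diag_frontier_cells_range: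
  assumes yh: "yh \<in> Xh" and N: "N \<ge> 1" and v: "v \<in> diag_frontier_cells N s yh"
  shows "\<lfloor>real N * (yh$i - s$i)\<rfloor> \<le> int (v i) \<and>
    int (v i) < \<lfloor>real N * (yh$i - s$i)\<rfloor> + int (nat \<lceil>A * real N\<rceil> + 1)"
proof -
  obtain h where h: "h \<in> diag_frontier yh" "s$i + real (v i) / real N \<le> h$i"
    "h$i < s$i + real (v i) / real N + 1 / real N"
    using v unfolding diag_frontier_cells_def by auto
  have N_pos: "real N > 0" using N by simp
  have "real (v i) \<le> real N * (h$i - s$i)" "real N * (h$i - s$i) < real (v i) + 1"
    using h(2,3) N_pos by (simp_all add: field_simps)
  moreover have "real N * (yh$i - s$i) < real N * (h$i - s$i)"
    "real N * (h$i - s$i) \<le> real N * (yh$i - s$i + A)"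
    using diag_frontier_bounds[OF yh h(1), of i] N_pos
    by (intro mult_strict_left_mono mult_left_mono; simp)+
  moreover have "of_int \<lfloor>real N * (yh$i - s$i)\<rfloor> \<le> real N * (yh$i - s$i)"
    "real N * (yh$i - s$i) < of_int \<lfloor>real N * (yh$i - s$i)\<rfloor> + 1"
    by linarith+
  moreover have "real N * (yh$i - s$i + A) = real N * (yh$i - s$i) + A * real N"
    by (simp add: algebra_simps)
  moreover have "A * real N \<le> of_int \<lceil>A * real N\<rceil>"
    by (rule le_of_int_ceiling)
  moreover have "0 < A * real N" using A_pos N_pos by simp
  then have "int (nat \<lceil>A * real N\<rceil>) = \<lceil>A * real N\<rceil>" by simp
  ultimately show ?thesis by linarith
qed

lemma card_diag_frontier_cells_le:
  assumes yh: "yh \<in> Xh" and N: "N \<ge> 1"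
  shows "finite (diag_frontier_cells N s yh)"
    and "card (diag_frontier_cells N s yh) \<le> CARD('n) * (nat \<lceil>A * real N\<rceil> + 1) ^ (CARD('n) - 1)"
proof -
  define B where "B = (\<lambda>v i. int (v i)) ` diag_frontier_cells N s yh"
  have inj: "inj (\<lambda>(v::'n \<Rightarrow> nat) i. int (v i))"
    by (rule injI) (simp add: fun_eq_iff)
  have "\<not> (\<forall>i. w i < v i)"
    if v: "v \<in> diag_frontier_cells N s yh" and w: "w \<in> diag_frontier_cells N s yh" for v w
  proof
    assume lt: "\<forall>i. w i < v i"
    obtain hv where hv: "hv \<in> diag_frontier yh" "\<forall>i. s$i + real (v i) / real N \<le> hv$i"
      using v unfolding diag_frontier_cells_def grid_point_nth by blast
    obtain hw where hw: "hw \<in> diag_frontier yh" "\<forall>i. hw$i < s$i + real (w i) / real N + 1 / real N"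
      using w unfolding diag_frontier_cells_def grid_point_nth by blast
    have "hw$i < hv$i" for i
    proof -
      have "real (w i) + 1 \<le> real (v i)" using lt[rule_format, of i] by linarith
      then have "real (w i) / real N + 1 / real N \<le> real (v i) / real N"
        by (simp add: add_divide_distrib[symmetric] divide_right_mono)
      then show ?thesis using hv(2)[rule_format, of i] hw(2)[rule_format, of i] by linarith
    qed
    then show False using diag_frontier_antichain[OF yh hw(1) hv(1)] by blast
  qed
  then have antichain: "\<not> (\<forall>i. w i < v i)" if "v \<in> B" "w \<in> B" for v w
    using that unfolding B_def by auto
  have range: "\<lfloor>real N * (yh$i - s$i)\<rfloor> \<le> v i \<and>
      v i < \<lfloor>real N * (yh$i - s$i)\<rfloor> + int (nat \<lceil>A * real N\<rceil> + 1)" if "v \<in> B" for v i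
    using that diag_frontier_cells_range[OF yh N] unfolding B_def by blast
  have "finite B" "card B \<le> CARD('n) * (nat \<lceil>A * real N\<rceil> + 1) ^ (CARD('n) - 1)"
    by (rule card_strict_antichain_le[of B "\<lambda>i. \<lfloor>real N * (yh$i - s$i)\<rfloor>"];
        use range antichain in blast)+
  moreover have "inj_on (\<lambda>v i. int (v i)) (diag_frontier_cells N s yh)"
    using inj by (rule inj_on_subset) simp
  ultimately show "finite (diag_frontier_cells N s yh)"
    and "card (diag_frontier_cells N s yh) \<le> CARD('n) * (nat \<lceil>A * real N\<rceil> + 1) ^ (CARD('n) - 1)"
    unfolding B_def by (simp_all add: finite_image_iff card_image)
qed

lemma Hbound_grid_point_in_cells:
  assumes N: "N \<ge> 1" and v: "\<forall>i. v i < q * N"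
    and vH: "grid_point N s v \<in> Hbound \<Lambda> X d fRep N"
  shows "\<exists>yh \<in> Xh \<inter> half_open_cube (s - (\<chi> i. A)) (real q + A). v \<in> diag_frontier_cells N s yh"
proof -
  obtain a h where gh: "grid_point N s v = a + h" and a: "\<forall>i. - (1 / real N) < a$i \<and> a$i \<le> 0"
    and h: "h \<in> Hset \<Lambda> X d fRep"
    using vH unfolding Hbound_def by blast
  obtain yh where yh: "yh \<in> Xh" "h \<in> diag_frontier yh"
    using Hset_subset_diag_frontier[OF h] by blast
  have cell: "s$i + real (v i) / real N \<le> h$i \<and> h$i < s$i + real (v i) / real N + 1 / real N" for i
  proof -
    have "h = grid_point N s v - a" using gh by (simp add: algebra_simps)
    then have "h$i = s$i + real (v i) / real N - a$i" by simp
    then show ?thesis using a[rule_format, of i] by linarith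
  qed
  then have "v \<in> diag_frontier_cells N s yh"
    unfolding diag_frontier_cells_def grid_point_nth using yh(2) by blast
  moreover have "(s - (\<chi> i. A))$i \<le> yh$i \<and> yh$i < (s - (\<chi> i. A))$i + (real q + A)" for i
  proof -
    have "real (v i) + 1 \<le> real q * real N"
      using v[rule_format, of i] by (simp flip: of_nat_Suc of_nat_mult)
    then have "real (v i) / real N + 1 / real N \<le> real q"
      using N by (simp add: field_simps)
    moreover have "s$i \<le> h$i"
    proof -
      have "0 \<le> real (v i) / real N" by simp
      then show ?thesis using cell[of i] by linarith
    qed
    ultimately show ?thesis
      using cell[of i] diag_frontier_bounds[OF yh, of i] by simp
  qed
  ultimately show ?thesis using yh(1) unfolding half_open_cube_def by blast
qed

lemma card_Gset_Int_Hbound_le: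
  assumes N: "N \<ge> 1"
  shows "real (card (Gset N q s \<inter> Hbound \<Lambda> X d fRep N)) \<le>
     real (nat \<lceil>(real q + A) / C\<rceil>) ^ CARD('n) * D *
       real (CARD('n) * (nat \<lceil>A * real N\<rceil> + 1) ^ (CARD('n) - 1))"
proof -
  define Y where "Y = Xh \<inter> half_open_cube (s - (\<chi> i. A)) (real q + A)"
  define M where "M = CARD('n) * (nat \<lceil>A * real N\<rceil> + 1) ^ (CARD('n) - 1)"
  have Y: "finite Y" "real (card Y) \<le> real (nat \<lceil>(real q + A) / C\<rceil>) ^ CARD('n) * D"
    unfolding Y_def using card_Int_half_open_cube_le[OF C_pos cubes] by blast+
  have cells: "finite (diag_frontier_cells N s yh)" "card (diag_frontier_cells N s yh) \<le> M"
    if "yh \<in> Y" for yh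
    using card_diag_frontier_cells_le[OF _ N] that unfolding Y_def M_def by blast+
  have "Gset N q s \<inter> Hbound \<Lambda> X d fRep N \<subseteq> grid_point N s ` (\<Union>yh\<in>Y. diag_frontier_cells N s yh)"
  proof
    fix p assume "p \<in> Gset N q s \<inter> Hbound \<Lambda> X d fRep N"
    then obtain v where v: "\<forall>i. v i < q * N" "p = grid_point N s v" "grid_point N s v \<in> Hbound \<Lambda> X d fRep N"
      unfolding Gset_eq_image by blast
    then obtain yh where "yh \<in> Y" "v \<in> diag_frontier_cells N s yh"
      using Hbound_grid_point_in_cells[OF N] unfolding Y_def by blast
    then show "p \<in> grid_point N s ` (\<Union>yh\<in>Y. diag_frontier_cells N s yh)"
      using v(2) by blast
  qed
  moreover have fin: "finite (\<Union>yh\<in>Y. diag_frontier_cells N s yh)"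
    using Y(1) cells(1) by blast
  ultimately have "card (Gset N q s \<inter> Hbound \<Lambda> X d fRep N) \<le> card (grid_point N s ` (\<Union>yh\<in>Y. diag_frontier_cells N s yh))"
    by (intro card_mono finite_imageI)
  also have "\<dots> \<le> card (\<Union>yh\<in>Y. diag_frontier_cells N s yh)"
    using fin by (rule card_image_le)
  also have "\<dots> \<le> (\<Sum>yh\<in>Y. card (diag_frontier_cells N s yh))"
    using Y(1) by (rule card_UN_le)
  also have "\<dots> \<le> card Y * M"
    using cells(2) sum_bounded_above[of Y "\<lambda>yh. card (diag_frontier_cells N s yh)" M] by simp
  finally have "real (card (Gset N q s \<inter> Hbound \<Lambda> X d fRep N)) \<le> real (card Y) * real M"
    by (simp flip: of_nat_mult)
  also have "\<dots> \<le> real (nat \<lceil>(real q + A) / C\<rceil>) ^ CARD('n) * D * real M"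
    using Y(2) by (rule mult_right_mono) simp
  finally show ?thesis unfolding M_def .
qed

end

theorem corollary5p2:
  fixes \<Lambda> :: "(real^'n) set" and X :: "'x set" and d :: "'x \<Rightarrow> real^'n"
    and fRep :: "('x \<times> (real^'n)) set"
    and A C D \<epsilon> :: real and N q L :: nat and s :: "real^'n"
  assumes infra: "infrastructure \<Lambda> X d fRep"
    and corn: "cornered \<Lambda> X d fRep"
    and A1: "A > 0" "\<forall>xh\<in>Xhat \<Lambda> X d. Vhat \<Lambda> X d fRep xh \<subseteq> (\<lambda>v. xh + v) ` cube 0 A"
    and A2: "C > 0" "D > 0"
       "\<forall>r::real^'n. finite ((\<lambda>v. r + v) ` cube 0 C \<inter> Xhat \<Lambda> X d) \<and>
              real (card ((\<lambda>v. r + v) ` cube 0 C \<inter> Xhat \<Lambda> X d)) \<le> D"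
    and C_le: "C \<le> 1"
    and NqL: "N \<ge> 1" "q \<ge> 1" "L \<ge> 1"
    and eps: "0 < \<epsilon>" "\<epsilon> \<le> 1 / (2 * real N * real L)"
    and q_ge: "real q \<ge> 9 * max 1 A"
    and N_ge: "real N \<ge> max (4 / A)
        (8 * (real CARD('n) + 1) * real CARD('n) * 2 ^ CARD('n) * D * A ^ (CARD('n) - 1)
          / (3 * C ^ CARD('n)))"
    and s_in: "s \<in> Sset N L"
    and disj: "Hgrid \<Lambda> X d fRep N \<epsilon> \<inter> Gset N q s = {}"
  shows "1 / real N \<le> A / 4 \<and>
         real (card (Gset N q s - Hbound \<Lambda> X d fRep N)) / real (card (Gset N q s))
           \<ge> 1 - 1 / (4 * (real CARD('n) + 1))"
proof -
  interpret regular_infrastructure \<Lambda> X d fRep A C D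
    using infra corn A1 A2(1,3) by unfold_locales
  have "1 / real N \<le> A / 4"
    using N_ge A1(1) NqL(1) by (simp add: field_simps)
  have "CARD('n) \<ge> 1" by (simp add: Suc_leI)
  have "real (card (Gset N q s \<inter> Hbound \<Lambda> X d fRep N)) \<le>
     real (nat \<lceil>(real q + A) / C\<rceil>) ^ CARD('n) * D *
       real (CARD('n) * (nat \<lceil>A * real N\<rceil> + 1) ^ (CARD('n) - 1))"
    by (rule card_Gset_Int_Hbound_le[OF NqL(1)])
  also have "\<dots> \<le> real ((q * N) ^ CARD('n)) / (4 * (real CARD('n) + 1))"
    using N_ge by (intro boundary_count_le_fraction[OF \<open>CARD('n) \<ge> 1\<close> A1(1) A2(1) C_le A2(2) q_ge]) auto
  also have "\<dots> = 1 / (4 * (real CARD('n) + 1)) * real (card (Gset N q s))"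
    unfolding finite_card_Gset(2)[OF NqL(1)] by simp
  finally have "real (card (Gset N q s \<inter> Hbound \<Lambda> X d fRep N))
      \<le> 1 / (4 * (real CARD('n) + 1)) * real (card (Gset N q s))" .
  then have "1 - 1 / (4 * (real CARD('n) + 1))
      \<le> real (card (Gset N q s - Hbound \<Lambda> X d fRep N)) / real (card (Gset N q s))"
    using finite_card_Gset[OF NqL(1), of q s] NqL(1,2) by (intro card_Diff_ratio_ge) auto
  then show ?thesis using \<open>1 / real N \<le> A / 4\<close> by simp
qed

end
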